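(* $C_{U(25)^2}(25)\le 9$; that is, every sequence of length $9$ in $\mathbb Z_{25}$ has a $U(25)^2$-weighted zero-sum subsequence consisting of consecutive terms.
   Context: $\mathbb Z_{25}=\mathbb Z/25\mathbb Z$, $U(25)$ its group of units, $U(25)^2=\{x^2:x\in U(25)\}$. For $A\subseteq\mathbb Z_m$, a sequence $(y_1,\dots,y_t)$ ($t\ge1$) is an $A$-weighted zero-sum sequence if there exist $a_i\in A$ with $\sum a_iy_i=0$. $C_A(m)$ is the least positive integer $t$ such that every sequence of length $t$ in $\mathbb Z_m$ has a nonempty subsequence of consecutive terms that is an $A$-weighted zero-sum sequence. *)

theory Defs
  imports Main
begin

text \<open>Z_m is represented by the residues {0..<m} :: int set; arithmetic is taken mod m.\<close>

definition Zmod :: "int \<Rightarrow> int set" where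
  "Zmod m = {0..<m}"

definition units_mod :: "int \<Rightarrow> int set" where
  "units_mod m = {x \<in> Zmod m. \<exists>y \<in> Zmod m. (x * y) mod m = 1 mod m}"

definition unit_squares_mod :: "int \<Rightarrow> int set" where
  "unit_squares_mod m = {(x * x) mod m | x. x \<in> units_mod m}"

definition weighted_zero_sum :: "int \<Rightarrow> int set \<Rightarrow> int list \<Rightarrow> bool" where
  "weighted_zero_sum m A ys \<longleftrightarrow> ys \<noteq> [] \<and>
     (\<exists>as. length as = length ys \<and> set as \<subseteq> A \<and>
        (\<Sum>i<length ys. as ! i * ys ! i) mod m = 0)"

definition has_consecutive_wzs :: "int \<Rightarrow> int set \<Rightarrow> int list \<Rightarrow> bool" where
  "has_consecutive_wzs m A xs \<longleftrightarrow>
     (\<exists>i j. i < j \<and> j \<le> length xs \<and> weighted_zero_sum m A (take (j - i) (drop i xs)))"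

definition C_const :: "int set \<Rightarrow> int \<Rightarrow> nat" where
  "C_const A m = (LEAST t. t > 0 \<and>
     (\<forall>xs. length xs = t \<and> set xs \<subseteq> Zmod m \<longrightarrow> has_consecutive_wzs m A xs))"

end

theory Submission
  imports Defs
begin

(*
  Let Q = U(25)^2 = {x. x = +-1 (mod 5)} and, for a sequence p, let S(p) be the set of
  Q-weighted sums of the nonempty suffixes of p; a zero-sum block exists iff 0 lies in S of
  some prefix. The nonzero residues split into four Q-orbits: the units = +-1 and = +-2
  (mod 5), {5, 20} and {10, 15}. Appending y to p puts the whole orbit of y into S(p y), and
  if that orbit was already inside S(p) then y + 24y = 0 is a zero sum. An orbit already
  inside S(p) stays inside S(p y), since z = (z - a y) + a y for a suitable a in {1, 24},
  except possibly a non-unit orbit when y is a unit. Weighting the unit orbits 3 and the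
  others 1, the weight of the orbits not inside S(p) starts at 8 and drops at every step
  without a zero sum, so one appears among any 9 terms.
*)

definition suffix_sums :: "int \<Rightarrow> int set \<Rightarrow> int list \<Rightarrow> int set" where
  "suffix_sums m A xs =
     {(\<Sum>k<length xs - i. as ! k * drop i xs ! k) mod m | i as.
        i < length xs \<and> length as = length xs - i \<and> set as \<subseteq> A}"

lemma suffix_sums_Nil [simp]: "suffix_sums m A [] = {}"
  by (simp add: suffix_sums_def)

lemma suffix_sums_snoc:
  assumes "s \<in> suffix_sums m A xs" "a \<in> A"
  shows "(s + a * y) mod m \<in> suffix_sums m A (xs @ [y])"
proof -
  obtain i as where i: "i < length xs" "length as = length xs - i" "set as \<subseteq> A"
    and s: "s = (\<Sum>k<length xs - i. as ! k * drop i xs ! k) mod m"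
    using assms(1) unfolding suffix_sums_def by blast
  have "(\<Sum>k<Suc (length xs - i). (as @ [a]) ! k * (drop i xs @ [y]) ! k)
        = (\<Sum>k<length xs - i. as ! k * drop i xs ! k) + a * y"
    using i by (simp add: nth_append)
  then have "(s + a * y) mod m
      = (\<Sum>k<length (xs @ [y]) - i. (as @ [a]) ! k * drop i (xs @ [y]) ! k) mod m"
    using i s by (simp add: Suc_diff_le mod_add_left_eq)
  then show ?thesis
    unfolding suffix_sums_def using i assms(2)
    by (intro CollectI exI[of _ i] exI[of _ "as @ [a]"]) auto
qed

lemma suffix_sums_snoc_last:
  assumes "a \<in> A" shows "(a * y) mod m \<in> suffix_sums m A (xs @ [y])"
  unfolding suffix_sums_def using assms
  by (intro CollectI exI[of _ "length xs"] exI[of _ "[a]"]) simp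

lemma has_consecutive_wzs_if_zero_suffix_sum:
  assumes "0 \<in> suffix_sums m A (take j xs)"
  shows "has_consecutive_wzs m A xs"
proof -
  define n where "n = min j (length xs)"
  have len: "length (take j xs) = n" by (simp add: n_def)
  obtain i as where i: "i < n" "length as = n - i" "set as \<subseteq> A"
    and zero: "0 = (\<Sum>k<n - i. as ! k * drop i (take j xs) ! k) mod m"
    using assms unfolding suffix_sums_def len by blast
  have block: "drop i (take j xs) = take (n - i) (drop i xs)"
    by (simp add: drop_take n_def min_def)
  have "weighted_zero_sum m A (take (n - i) (drop i xs))"
    unfolding weighted_zero_sum_def using i zero block n_def by (intro conjI exI[of _ as]) auto
  then show ?thesis
    unfolding has_consecutive_wzs_def using i n_def by (intro exI[of _ i] exI[of _ n]) auto
qed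

lemma C_const_le:
  assumes "0 < t" "\<And>xs. length xs = t \<Longrightarrow> set xs \<subseteq> Zmod m \<Longrightarrow> has_consecutive_wzs m A xs"
  shows "C_const A m \<le> t"
  unfolding C_const_def using assms by (intro Least_le) blast

lemma subset_suffix_sums_snoc_multiples:
  assumes "\<forall>z\<in>B. \<exists>a\<in>A. z = a * y mod m"
  shows "B \<subseteq> suffix_sums m A (xs @ [y])"
  using assms suffix_sums_snoc_last by fastforce

lemma subset_suffix_sums_snoc_shift:
  assumes "B \<subseteq> suffix_sums m A xs" "B \<subseteq> {0..<m}" "\<forall>z\<in>B. \<exists>a\<in>A. (z - a * y) mod m \<in> B"
  shows "B \<subseteq> suffix_sums m A (xs @ [y])"
proof
  fix z assume "z \<in> B"
  then obtain a where a: "a \<in> A" "(z - a * y) mod m \<in> suffix_sums m A xs"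
    using assms(1,3) by blast
  have "((z - a * y) mod m + a * y) mod m = z"
    using \<open>z \<in> B\<close> assms(2) by (auto simp: mod_add_left_eq)
  then show "z \<in> suffix_sums m A (xs @ [y])"
    using suffix_sums_snoc[OF a(2) a(1), of y] by simp
qed

lemma Zmod_25: "Zmod 25 = set [0..24]"
  by (auto simp: Zmod_def)

lemma units_mod_25:
  "units_mod 25 = {1, 2, 3, 4, 6, 7, 8, 9, 11, 12, 13, 14, 16, 17, 18, 19, 21, 22, 23, 24}"
proof -
  have "units_mod 25 = set (filter (\<lambda>x. \<exists>y\<in>set [0..24]. x * y mod 25 = 1) [0..24])"
    unfolding units_mod_def Zmod_25 set_filter by simp
  also have "\<dots> = {1, 2, 3, 4, 6, 7, 8, 9, 11, 12, 13, 14, 16, 17, 18, 19, 21, 22, 23, 24}"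
    by (simp add: upto.simps)
  finally show ?thesis .
qed

lemma unit_squares_mod_25: "unit_squares_mod 25 = {1, 4, 6, 9, 11, 14, 16, 19, 21, 24}"
proof -
  have "unit_squares_mod 25 = (\<lambda>x. x * x mod 25) ` units_mod 25"
    by (auto simp: unit_squares_mod_def)
  then show ?thesis by (simp add: units_mod_25 insert_commute)
qed

datatype orbit25 = Square_units | Nonsquare_units | Five_squares | Five_nonsquares

lemma UNIV_orbit25:
  "(UNIV :: orbit25 set) = {Square_units, Nonsquare_units, Five_squares, Five_nonsquares}"
  using orbit25.exhaust by auto

instance orbit25 :: finite
  by standard (simp add: UNIV_orbit25)

fun orbit_elems :: "orbit25 \<Rightarrow> int set" where
  "orbit_elems Square_units = {1, 4, 6, 9, 11, 14, 16, 19, 21, 24}"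
| "orbit_elems Nonsquare_units = {2, 3, 7, 8, 12, 13, 17, 18, 22, 23}"
| "orbit_elems Five_squares = {5, 20}"
| "orbit_elems Five_nonsquares = {10, 15}"

fun is_unit_orbit :: "orbit25 \<Rightarrow> bool" where
  "is_unit_orbit Square_units = True"
| "is_unit_orbit Nonsquare_units = True"
| "is_unit_orbit Five_squares = False"
| "is_unit_orbit Five_nonsquares = False"

lemma orbit_elems_nonempty: "orbit_elems c \<noteq> {}"
  by (cases c) simp_all

lemma orbit_elems_subset: "orbit_elems c \<subseteq> {0..<25}"
  by (cases c) simp_all

lemma Union_orbit_elems: "(\<Union>c. orbit_elems c) = {1..<25}"
proof -
  have "{1..<25::int} = set [1..24]" by auto
  then show ?thesis by (simp add: UNIV_orbit25 upto.simps insert_commute)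
qed

lemma orbit_elems_transitive:
  "\<forall>y\<in>orbit_elems c. \<forall>z\<in>orbit_elems c. \<exists>a\<in>unit_squares_mod 25. z = a * y mod 25"
  by (cases c) (simp_all add: unit_squares_mod_25)

definition persists :: "orbit25 \<Rightarrow> orbit25 \<Rightarrow> bool" where
  "persists c t \<longleftrightarrow> c \<noteq> t \<and> (is_unit_orbit c \<or> \<not> is_unit_orbit t)"

lemma orbit_elems_shift:
  "persists c t \<Longrightarrow> \<forall>y\<in>orbit_elems t. \<forall>z\<in>orbit_elems c.
    \<exists>a\<in>{1, 24}. (z - a * y) mod 25 \<in> orbit_elems c"
  by (cases c; cases t) (simp_all add: persists_def)

text \<open>A unit can expel both non-unit orbits (total weight 2) while covering its own orbit,
  so unit orbits must weigh more than 2.\<close>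
definition orbit_weight :: "orbit25 \<Rightarrow> nat" where
  "orbit_weight c = (if is_unit_orbit c then 3 else 1)"

definition potential :: "orbit25 set \<Rightarrow> nat" where
  "potential K = (\<Sum>c\<in>-K. orbit_weight c)"

lemma potential_empty: "potential {} = 8"
  by (simp add: potential_def UNIV_orbit25 orbit_weight_def)

lemma potential_antimono: "K \<subseteq> L \<Longrightarrow> potential L \<le> potential K"
  unfolding potential_def by (intro sum_mono2) auto

lemma potential_insert_persisting_less:
  assumes "t \<notin> K"
  shows "potential (insert t {c\<in>K. persists c t}) < potential K"
proof -
  have "potential L = (\<Sum>c\<in>UNIV. if c \<in> L then 0 else orbit_weight c)" for L
    by (simp add: potential_def sum.If_cases Compl_eq_Diff_UNIV)
  then show ?thesis
    using assms by (cases t) (auto simp: UNIV_orbit25 persists_def orbit_weight_def)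
qed

definition covered_orbits :: "int list \<Rightarrow> orbit25 set" where
  "covered_orbits xs = {c. orbit_elems c \<subseteq> suffix_sums 25 (unit_squares_mod 25) xs}"

lemma potential_covered_orbits_snoc_less:
  assumes zero_free: "0 \<notin> suffix_sums 25 (unit_squares_mod 25) (xs @ [y])"
    and y: "y \<in> {0..<25}"
  shows "potential (covered_orbits (xs @ [y])) < potential (covered_orbits xs)"
proof -
  let ?S = "suffix_sums 25 (unit_squares_mod 25)"
  have "y \<noteq> 0"
    using zero_free suffix_sums_snoc_last[of 1 "unit_squares_mod 25" y 25 xs]
    by (auto simp: unit_squares_mod_25)
  then have "y \<in> (\<Union>c. orbit_elems c)"
    using y by (simp add: Union_orbit_elems)
  then obtain t where t: "y \<in> orbit_elems t"
    by blast
  have uncovered: "t \<notin> covered_orbits xs"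
  proof
    assume "t \<in> covered_orbits xs"
    then have "y \<in> ?S xs" using t by (auto simp: covered_orbits_def)
    then have "(y + 24 * y) mod 25 \<in> ?S (xs @ [y])"
      by (rule suffix_sums_snoc) (simp add: unit_squares_mod_25)
    then show False using zero_free by simp
  qed
  have "orbit_elems t \<subseteq> ?S (xs @ [y])"
    using orbit_elems_transitive t by (intro subset_suffix_sums_snoc_multiples) blast
  moreover have "orbit_elems c \<subseteq> ?S (xs @ [y])"
    if "c \<in> covered_orbits xs" "persists c t" for c
  proof (rule subset_suffix_sums_snoc_shift)
    show "\<forall>z\<in>orbit_elems c. \<exists>a\<in>unit_squares_mod 25. (z - a * y) mod 25 \<in> orbit_elems c"
      using orbit_elems_shift[OF that(2)] t by (fastforce simp: unit_squares_mod_25)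
  qed (use that orbit_elems_subset in \<open>auto simp: covered_orbits_def\<close>)
  ultimately have "insert t {c \<in> covered_orbits xs. persists c t} \<subseteq> covered_orbits (xs @ [y])"
    by (auto simp: covered_orbits_def)
  then have "potential (covered_orbits (xs @ [y]))
      \<le> potential (insert t {c \<in> covered_orbits xs. persists c t})"
    by (rule potential_antimono)
  also have "\<dots> < potential (covered_orbits xs)"
    by (rule potential_insert_persisting_less[OF uncovered])
  finally show ?thesis .
qed

lemma length_plus_potential_le:
  assumes "set xs \<subseteq> {0..<25}" "\<forall>j. 0 \<notin> suffix_sums 25 (unit_squares_mod 25) (take j xs)"
  shows "length xs + potential (covered_orbits xs) \<le> 8"
  using assms
proof (induction xs rule: rev_induct)
  case Nil
  have "covered_orbits [] = {}"
    using orbit_elems_nonempty by (auto simp: covered_orbits_def)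
  then show ?case by (simp add: potential_empty)
next
  case (snoc y xs)
  have "take j xs = take (min j (length xs)) (xs @ [y])" for j
    by (simp add: min_def)
  then have "\<forall>j. 0 \<notin> suffix_sums 25 (unit_squares_mod 25) (take j xs)"
    using snoc.prems(2) by metis
  with snoc have "length xs + potential (covered_orbits xs) \<le> 8"
    by simp
  moreover have "potential (covered_orbits (xs @ [y])) < potential (covered_orbits xs)"
    using snoc.prems spec[OF snoc.prems(2), of "Suc (length xs)"]
    by (intro potential_covered_orbits_snoc_less) auto
  ultimately show ?case by simp
qed

theorem mainTheorem16:
  shows "C_const (unit_squares_mod 25) 25 \<le> 9"
proof (rule C_const_le)
  fix xs :: "int list"
  assume "length xs = 9" "set xs \<subseteq> Zmod 25"
  then obtain j where "0 \<in> suffix_sums 25 (unit_squares_mod 25) (take j xs)"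
    using length_plus_potential_le[of xs] by (force simp: Zmod_def)
  then show "has_consecutive_wzs 25 (unit_squares_mod 25) xs"
    by (rule has_consecutive_wzs_if_zero_suffix_sum)
qed simp

end
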